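(* Assume Schinzel's Hypothesis H. Let $p$ be a prime with $p\equiv 1\pmod 8$ and $p\equiv 2\pmod 3$, and let $\mathfrak{C}_p$ be the set of septuples $(A,B,C,D,E,F,G)\in\mathbb{Z}^7$ of the parametrized form described below that satisfy (A1), (A3), (A4), (A5), (A7), and (A6) for every integer $n\ge1$. Then for every positive integer $n$ there exist infinitely many septuples in $\mathfrak{C}_p$ satisfying Hypothesis FM with respect to $(p,n)$. Parametrized form: there are nonzero odd integers $\lambda,\gamma$ with $\gcd(\lambda,3\gamma)=\gcd(p,3\gamma)=\gcd(p,\lambda)=1$, nonzero integers $\epsilon_0,\delta_0$ with $p\lambda^2\epsilon_0+9\gamma^2\delta_0=1$, and integers $\mu,t_0,F_0$ with $A=\frac{p\lambda^2-9\gamma^2}{2}$, $B=2pF_0^2(\delta_0-\epsilon_0-\mu(p\lambda^2+9\gamma^2))+(p\lambda^2+9\gamma^2)t_0F_0$, $C=2pF_0^2(\delta_0+\epsilon_0-\mu(p\lambda^2-9\gamma^2))+(p\lambda^2-9\gamma^2)t_0F_0$, $D=\frac{p\lambda^2+9\gamma^2}{2}$, $E=F_0(2pF_0(\epsilon_0+9\mu\gamma^2)-9\gamma^2t_0)(2F_0(\delta_0-p\mu\lambda^2)+\lambda^2t_0)$, $F=2F_0$, $G=3\lambda\gamma$.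
   Context: Schinzel's Hypothesis H: if $F_1,\dots,F_k\in\mathbb{Z}[x]$ are nonconstant, irreducible over $\mathbb{Q}$, with positive leading coefficients, and the product $\prod_i F_i$ has no fixed prime divisor (no prime $q$ divides $\prod_iF_i(m)$ for all integers $m$), then there are infinitely many positive integers $x$ such that $F_1(x),\dots,F_k(x)$ are simultaneously prime. $v_l$ is the $l$-adic valuation. Conditions on $(A,B,C,D,E,F,G)\in\mathbb{Z}^7$ (for a prime $p\equiv1\pmod 8$ and integer $n\ge1$): (A1) $B^2 - C^2 + 2pEF = 0$, $2AB - 2CD + pF^2 = 0$, $A^2 - D^2 + pG^2 = 0$; (A2) for every odd prime $l$ with $l\ne 3$, $l\ne p$, $l\mid E$: $p$ is a square in $\mathbb{Q}_l^\times$ or $v_l(E)-v_l(G)<6n$; (A3) $\gcd(A,D,G)=1$, $E\not\equiv 0 \pmod p$, $G\not\equiv 0\pmod p$; (A4) for every odd prime $l$ with $l\ne 3$, $l\ne p$, $l \mid \gcd(AC-BD,\ DE-CF,\ AE-BF)$: $p$ is a square in $\mathbb{Q}_l^\times$; (A5) there is an integer $H$ with $G - EH^6\equiv 0 \pmod p$ such that $A+\zeta BH^4$ is a quadratic non-residue in $\mathbb{F}_p^\times$ for every cube root of unity $\zeta\in\mathbb{F}_p^\times$; (A6) $v_3(E)-v_3(G)<6n$; (A7) $A+B\not\equiv 0\pmod 3$ and $G\equiv 0 \pmod 3$. The septuple (not all zero) satisfies Hypothesis FM with respect to $(p,n)$ if (A1)–(A5) hold and, in case $3$ is a quadratic non-residue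 in $\mathbb{F}_p^\times$, also (A6) and (A7). *)

theory Defs
  imports "HOL-Number_Theory.Number_Theory" "HOL-Computational_Algebra.Computational_Algebra"
begin

type_synonym septuple = "int \<times> int \<times> int \<times> int \<times> int \<times> int \<times> int"

definition SchinzelH :: bool where
  "SchinzelH \<longleftrightarrow>
    (\<forall>Fs :: int poly list.
      (\<forall>F \<in> set Fs. degree F > 0 \<and> irreducible (map_poly (of_int :: int \<Rightarrow> rat) F)
                      \<and> lead_coeff F > 0)
      \<and> \<not> (\<exists>q::int. prime q \<and> (\<forall>m::int. q dvd (\<Prod>F\<leftarrow>Fs. poly F m)))
      \<longrightarrow> infinite {x::int. x > 0 \<and> (\<forall>F \<in> set Fs. prime (poly F x))})"

text \<open>The integer a is a square in Q_l^x (l prime): a is nonzero and a square in Z_l,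
  i.e. a is a square modulo every power of l.\<close>
definition padic_square :: "int \<Rightarrow> int \<Rightarrow> bool" where
  "padic_square l a \<longleftrightarrow> a \<noteq> 0 \<and> (\<forall>k::nat. \<exists>x::int. [x^2 = a] (mod l^k))"

definition QNR :: "int \<Rightarrow> int \<Rightarrow> bool" where
  "QNR p a \<longleftrightarrow> \<not> [a = 0] (mod p) \<and> \<not> QuadRes p a"

definition A1 :: "int \<Rightarrow> septuple \<Rightarrow> bool" where
  "A1 p s = (case s of (A,B,C,D,E,F,G) \<Rightarrow>
     B^2 - C^2 + 2*p*E*F = 0 \<and> 2*A*B - 2*C*D + p*F^2 = 0 \<and> A^2 - D^2 + p*G^2 = 0)"

definition A2 :: "int \<Rightarrow> nat \<Rightarrow> septuple \<Rightarrow> bool" where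
  "A2 p n s = (case s of (A,B,C,D,E,F,G) \<Rightarrow>
     (\<forall>l::int. prime l \<and> odd l \<and> l \<noteq> 3 \<and> l \<noteq> p \<and> l dvd E \<longrightarrow>
        padic_square l p \<or> int (multiplicity l E) - int (multiplicity l G) < 6 * int n))"

definition A3 :: "int \<Rightarrow> septuple \<Rightarrow> bool" where
  "A3 p s = (case s of (A,B,C,D,E,F,G) \<Rightarrow>
     gcd (gcd A D) G = 1 \<and> \<not> [E = 0] (mod p) \<and> \<not> [G = 0] (mod p))"

definition A4 :: "int \<Rightarrow> septuple \<Rightarrow> bool" where
  "A4 p s = (case s of (A,B,C,D,E,F,G) \<Rightarrow>
     (\<forall>l::int. prime l \<and> odd l \<and> l \<noteq> 3 \<and> l \<noteq> p
        \<and> l dvd gcd (gcd (A*C - B*D) (D*E - C*F)) (A*E - B*F) \<longrightarrow> padic_square l p))"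

text \<open>Cube roots of unity in F_p^x are represented by integers z with z^3 = 1 mod p.\<close>
definition A5 :: "int \<Rightarrow> septuple \<Rightarrow> bool" where
  "A5 p s = (case s of (A,B,C,D,E,F,G) \<Rightarrow>
     (\<exists>H::int. [G - E*H^6 = 0] (mod p) \<and>
        (\<forall>z::int. [z^3 = 1] (mod p) \<longrightarrow> QNR p (A + z*B*H^4))))"

definition A6 :: "nat \<Rightarrow> septuple \<Rightarrow> bool" where
  "A6 n s = (case s of (A,B,C,D,E,F,G) \<Rightarrow>
     int (multiplicity 3 E) - int (multiplicity 3 G) < 6 * int n)"

definition A7 :: "septuple \<Rightarrow> bool" where
  "A7 s = (case s of (A,B,C,D,E,F,G) \<Rightarrow>
     \<not> [A + B = 0] (mod 3) \<and> [G = 0] (mod 3))"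

definition HypFM :: "int \<Rightarrow> nat \<Rightarrow> septuple \<Rightarrow> bool" where
  "HypFM p n s \<longleftrightarrow> s \<noteq> (0,0,0,0,0,0,0) \<and> A1 p s \<and> A2 p n s \<and> A3 p s \<and> A4 p s \<and> A5 p s
     \<and> (QNR p 3 \<longrightarrow> A6 n s \<and> A7 s)"

definition param_form :: "int \<Rightarrow> septuple \<Rightarrow> bool" where
  "param_form p s \<longleftrightarrow> (\<exists>lam gam eps0 del0 mu t0 F0 :: int.
     lam \<noteq> 0 \<and> gam \<noteq> 0 \<and> odd lam \<and> odd gam \<and>
     gcd lam (3*gam) = 1 \<and> gcd p (3*gam) = 1 \<and> gcd p lam = 1 \<and>
     eps0 \<noteq> 0 \<and> del0 \<noteq> 0 \<and> p*lam^2*eps0 + 9*gam^2*del0 = 1 \<and>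
     s = ((p*lam^2 - 9*gam^2) div 2,
          2*p*F0^2*(del0 - eps0 - mu*(p*lam^2 + 9*gam^2)) + (p*lam^2 + 9*gam^2)*t0*F0,
          2*p*F0^2*(del0 + eps0 - mu*(p*lam^2 - 9*gam^2)) + (p*lam^2 - 9*gam^2)*t0*F0,
          (p*lam^2 + 9*gam^2) div 2,
          F0*(2*p*F0*(eps0 + 9*mu*gam^2) - 9*gam^2*t0)*(2*F0*(del0 - p*mu*lam^2) + lam^2*t0),
          2*F0,
          3*lam*gam))"

definition Cp :: "int \<Rightarrow> septuple set" where
  "Cp p = {s. param_form p s \<and> A1 p s \<and> A3 p s \<and> A4 p s \<and> A5 p s \<and> A7 s
              \<and> (\<forall>n::nat. n \<ge> 1 \<longrightarrow> A6 n s)}"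

end

theory Submission
  imports Defs
begin

text \<open>Specialise the parametrized form so that the septuple depends only on \<open>p\<close> and one
  integer \<open>L\<close>, with \<open>E = 9L(2 - 3L)\<close> and \<open>G = 3\<close>. If \<open>L\<close> and \<open>3L - 2\<close> are prime, every
  valuation of \<open>E\<close> is at most \<open>4 < 6n\<close>, which settles (A2) and (A6); the gcd in (A4) has no odd
  prime factor besides \<open>3\<close> and \<open>p\<close>. If moreover \<open>3L \<equiv> 1 (mod p)\<close>, then
  \<open>G - E = 3(3L - 1)\<^sup>2 \<equiv> 0\<close>, so \<open>H = 1\<close> works in (A5): as \<open>p \<equiv> 2 (mod 3)\<close> the only cube
  root of unity is \<open>1\<close>, and \<open>A + B \<equiv> -27/2\<close> is a non-residue because \<open>3\<close> is one while
  \<open>-1\<close> and \<open>2\<close> are residues for \<open>p \<equiv> 1 (mod 8)\<close>. Hypothesis H, applied to \<open>L = c + py\<close>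
  and \<open>3L - 2\<close> with \<open>3c = p + 1\<close>, supplies infinitely many such \<open>L\<close>.\<close>

section \<open>Quadratic residues modulo \<open>p\<close>\<close>

lemma Legendre_cong:
  assumes "[a = b] (mod p)"
  shows "Legendre a p = Legendre b p"
proof -
  have "QuadRes p a \<longleftrightarrow> QuadRes p b"
    using assms unfolding QuadRes_def by (meson cong_sym cong_trans)
  moreover have "[a = 0] (mod p) \<longleftrightarrow> [b = 0] (mod p)"
    using assms by (meson cong_sym cong_trans)
  ultimately show ?thesis unfolding Legendre_def by simp
qed

lemma Legendre_values: "Legendre a p \<in> {-1, 0, 1}"
  unfolding Legendre_def by simp

lemma euler_criterion_int:
  fixes p :: int
  assumes "prime p" "2 < p"
  shows "[Legendre a p = a ^ ((nat p - 1) div 2)] (mod p)"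
  using euler_criterion[of "nat p" a] assms by (simp add: prime_nat_iff_prime)

lemma Legendre_mult:
  fixes p :: int
  assumes "prime p" "2 < p"
  shows "Legendre (a * b) p = Legendre a p * Legendre b p"
proof -
  let ?h = "(nat p - 1) div 2"
  have "[Legendre (a * b) p = (a * b) ^ ?h] (mod p)"
    using euler_criterion_int[OF assms] .
  moreover have "[Legendre a p * Legendre b p = a ^ ?h * b ^ ?h] (mod p)"
    using euler_criterion_int[OF assms] by (intro cong_mult)
  ultimately have "p dvd Legendre (a * b) p - Legendre a p * Legendre b p" (is "p dvd ?d")
    by (metis cong_iff_dvd_diff cong_sym cong_trans power_mult_distrib)
  moreover have "\<bar>?d\<bar> < p"
    using assms Legendre_values[of "a * b" p] Legendre_values[of a p] Legendre_values[of b p]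
    by auto
  ultimately show ?thesis using dvd_imp_le_int[of ?d p] by force
qed

lemma Legendre_three:
  fixes p :: int
  assumes "prime p" "p mod 4 = 1" "p mod 3 = 2"
  shows "Legendre 3 p = -1"
proof -
  have "2 < p" using prime_gt_1_int[OF assms(1)] assms(2) by presburger
  have "Legendre p 3 * Legendre 3 p = (- 1) ^ nat ((p - 1) div 2 * ((3 - 1) div 2))"
    by (rule Quadratic_Reciprocity_int)
       (use assms \<open>2 < p\<close> in \<open>auto simp: prime_nat_iff_prime\<close>)
  also have "nat ((p - 1) div 2 * ((3 - 1) div 2)) = 2 * nat ((p - 1) div 4)"
  proof -
    have "(p - 1) div 2 = 2 * ((p - 1) div 4)" using assms(2) by presburger
    then show ?thesis using \<open>2 < p\<close> by (simp add: nat_mult_distrib)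
  qed
  finally have reciprocity: "Legendre p 3 * Legendre 3 p = 1"
    by (simp add: power_mult)
  have "\<not> QuadRes 3 2"
  proof
    assume "QuadRes 3 2"
    then obtain y :: int where "[y^2 = 2] (mod 3)" unfolding QuadRes_def by blast
    then have "(y mod 3)^2 mod 3 = 2" by (simp add: cong_def power_mod)
    moreover have "y mod 3 \<in> {0, 1, 2}" by auto
    ultimately show False by auto
  qed
  then have "Legendre 2 3 = -1" unfolding Legendre_def by (simp add: cong_def)
  moreover have "Legendre p 3 = Legendre 2 3"
    using assms(3) by (intro Legendre_cong) (simp add: cong_def)
  ultimately show ?thesis using reciprocity by simp
qed

lemma QNR_iff_Legendre: "QNR p a \<longleftrightarrow> Legendre a p = -1"
  unfolding QNR_def Legendre_def by simp

lemma fourth_root_of_minus_one: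
  fixes p a :: int
  assumes "prime p" "p mod 8 = 1" "Legendre a p = -1"
  obtains z where "[z ^ 4 = -1] (mod p)"
proof -
  have "2 < p" using prime_gt_1_int[OF assms(1)] assms(2) by presburger
  define N where "N = nat (p div 8)"
  have "int (8 * N + 1) = p" using assms(2) \<open>2 < p\<close> unfolding N_def by simp presburger
  then have "(nat p - 1) div 2 = 4 * N" by auto
  then have "[(a ^ N) ^ 4 = -1] (mod p)"
    using euler_criterion_int[OF assms(1) \<open>2 < p\<close>, of a] assms(3)
    by (simp add: power_mult[symmetric] mult.commute cong_sym)
  then show ?thesis by (rule that)
qed

lemma Legendre_minus_one_eq_one:
  fixes p :: int
  assumes "2 < p" "[z ^ 4 = -1] (mod p)"
  shows "Legendre (-1) p = 1"
proof -
  have "[(z^2)^2 = -1] (mod p)" using assms(2) by (simp flip: power_mult)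
  then have "QuadRes p (-1)" unfolding QuadRes_def by blast
  moreover have "\<not> [-1 = 0] (mod p)" using assms(1) by (simp add: cong_def zmod_minus1)
  ultimately show ?thesis unfolding Legendre_def by simp
qed

lemma Legendre_two_eq_one:
  fixes p :: int
  assumes "2 < p" "[z ^ 4 = -1] (mod p)"
  shows "Legendre 2 p = 1"
proof -
  have "(z - z^3)^2 - 2 = (z^2 - 2) * (z^4 + 1)" by (simp add: eval_nat_numeral algebra_simps)
  moreover have "p dvd z^4 + 1" using assms(2) by (simp add: cong_iff_dvd_diff)
  ultimately have "[(z - z^3)^2 = 2] (mod p)" by (simp add: cong_iff_dvd_diff)
  then have "QuadRes p 2" unfolding QuadRes_def by blast
  moreover have "\<not> [2 = 0] (mod p)" using assms(1) by (simp add: cong_def)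
  ultimately show ?thesis unfolding Legendre_def by simp
qed

lemma QNR_if_double_cong_minus_27:
  fixes p a :: int
  assumes "prime p" "p mod 8 = 1" "p mod 3 = 2" "[2 * a = -27] (mod p)"
  shows "QNR p a"
proof -
  have "2 < p" using prime_gt_1_int[OF assms(1)] assms(2) by presburger
  have "p mod 4 = 1" using assms(2) by presburger
  then have three: "Legendre 3 p = -1" using Legendre_three assms(1,3) by blast
  obtain z where z: "[z ^ 4 = -1] (mod p)" using fourth_root_of_minus_one[OF assms(1,2) three] .
  have "Legendre 2 p * Legendre a p = Legendre (-27) p"
    using Legendre_mult[OF assms(1) \<open>2 < p\<close>] Legendre_cong[OF assms(4)] by simp
  also have "Legendre (-27) p = Legendre (-1) p * Legendre 3 p * Legendre 3 p * Legendre 3 p"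
    using Legendre_mult[OF assms(1) \<open>2 < p\<close>, of "-1 * 3 * 3" 3]
      Legendre_mult[OF assms(1) \<open>2 < p\<close>, of "-1 * 3" 3]
      Legendre_mult[OF assms(1) \<open>2 < p\<close>, of "-1" 3]
    by simp
  finally show ?thesis
    unfolding QNR_iff_Legendre
    using three Legendre_two_eq_one[OF \<open>2 < p\<close> z] Legendre_minus_one_eq_one[OF \<open>2 < p\<close> z]
    by simp
qed

lemma fermat_theorem_int:
  fixes p z :: int
  assumes "prime p" "\<not> p dvd z"
  shows "[z ^ (nat p - 1) = 1] (mod p)"
proof -
  have "0 < z mod p" "z mod p < p"
    using assms prime_gt_1_int[OF assms(1)] by (auto simp: dvd_eq_mod_eq_0 order_le_neq_trans)
  then have "[nat (z mod p) ^ (nat p - 1) = 1] (mod nat p)"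
    using assms(1) nat_dvd_not_less[of "nat (z mod p)" "nat p"]
    by (intro fermat_theorem) (auto simp: prime_nat_iff_prime)
  then have "[(z mod p) ^ (nat p - 1) = 1] (mod p)"
    using prime_gt_1_int[OF assms(1)] by (simp add: cong_int_iff[symmetric])
  then show ?thesis by (simp add: cong_def power_mod)
qed

lemma cube_root_of_unity_trivial:
  fixes p z :: int
  assumes "prime p" "p mod 3 = 2" "[z ^ 3 = 1] (mod p)"
  shows "[z = 1] (mod p)"
proof -
  have "\<not> p dvd z"
  proof
    assume "p dvd z"
    then have "p dvd z ^ 3" by (simp add: power3_eq_cube)
    then have "p dvd 1" using assms(3) by (simp add: cong_dvd_iff)
    then show False using assms(1) not_prime_unit by blast
  qed
  define K where "K = nat (p div 3)"
  have "int (3 * K + 2) = p"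
    using assms(2) prime_gt_1_int[OF assms(1)] unfolding K_def by simp presburger
  then have "nat p - 1 = 3 * K + 1" by auto
  then have "z ^ (nat p - 1) = (z ^ 3) ^ K * z"
    by (metis power_add power_mult power_one_right)
  also have "[\<dots> = 1 ^ K * z] (mod p)"
    using assms(3) by (intro cong_mult cong_pow cong_refl)
  finally have "[z ^ (nat p - 1) = z] (mod p)" by simp
  then show ?thesis using fermat_theorem_int[OF assms(1) \<open>\<not> p dvd z\<close>]
    by (metis cong_sym cong_trans)
qed

section \<open>Prime values of two linear polynomials\<close>

lemma linear_poly_admissible:
  fixes a b :: int
  assumes "b > 0"
  shows "degree [:a, b:] > 0 \<and> irreducible (map_poly (of_int :: int \<Rightarrow> rat) [:a, b:])
    \<and> lead_coeff [:a, b:] > 0"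
proof -
  have "irreducible [:of_int a, of_int b :: rat:]"
    using assms by (intro irreducible_linear_field_poly) simp
  then show ?thesis using assms by (simp add: map_poly_pCons)
qed

lemma no_fixed_prime_divisor:
  fixes p c q :: int
  assumes "prime p" "3 * c = p + 1" "prime q"
  shows "\<exists>m. \<not> q dvd (3 * (c + p * m) - 2) * (c + p * m)"
proof (cases "q = p")
  case True
  have "\<not> p dvd p - 1"
  proof
    assume "p dvd p - 1"
    then have "p dvd p - (p - 1)" using dvd_diff[OF dvd_refl] by blast
    then have "p dvd 1" by simp
    then show False using assms(1) not_prime_unit by blast
  qed
  moreover have "\<not> p dvd c"
  proof
    assume "p dvd c"
    then have "p dvd 3 * c - p" by simp
    then have "p dvd 1" using assms(2) by simp
    then show False using assms(1) not_prime_unit by blast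
  qed
  ultimately have "\<not> q dvd (3 * (c + p * 0) - 2) * (c + p * 0)"
    using True assms(1,2) by (simp add: prime_dvd_mult_iff)
  then show ?thesis by blast
next
  case False
  then have "coprime p q" using assms(1,3) by (simp add: primes_coprime)
  then obtain i where "[p * i = 1] (mod q)" using cong_solve_coprime_int by blast
  then have "[c + p * i * (1 - c) = c + 1 * (1 - c)] (mod q)"
    by (intro cong_add cong_mult cong_refl)
  then have "[c + p * (i * (1 - c)) = 1] (mod q)" by (simp add: mult.assoc)
  then have "[(3 * (c + p * (i * (1 - c))) - 2) * (c + p * (i * (1 - c))) = (3 * 1 - 2) * 1] (mod q)"
    by (intro cong_mult cong_diff cong_refl)
  then have "\<not> q dvd (3 * (c + p * (i * (1 - c))) - 2) * (c + p * (i * (1 - c)))"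
    using prime_gt_1_int[OF assms(3)] by (simp add: cong_dvd_iff)
  then show ?thesis by blast
qed

lemma infinite_prime_pairs_in_progression:
  fixes p :: int
  assumes "SchinzelH" "prime p" "p mod 3 = 2"
  shows "infinite {L. prime L \<and> prime (3 * L - 2) \<and> [3 * L = 1] (mod p)}"
proof -
  define c where "c = (p + 1) div 3"
  have c: "3 * c = p + 1" unfolding c_def using assms(3) by presburger
  have "p > 0" using prime_gt_0_int[OF assms(2)] .
  define Fs where "Fs = [[:p - 1, 3 * p:], [:c, p:]]"
  have product_values: "(\<Prod>F\<leftarrow>Fs. poly F m) = (3 * (c + p * m) - 2) * (c + p * m)" for m
    using c unfolding Fs_def by (simp add: algebra_simps)
  have "\<forall>F \<in> set Fs. degree F > 0 \<and> irreducible (map_poly (of_int :: int \<Rightarrow> rat) F)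
      \<and> lead_coeff F > 0"
    unfolding Fs_def using linear_poly_admissible \<open>p > 0\<close> by simp
  moreover have "\<not> (\<exists>q::int. prime q \<and> (\<forall>m. q dvd (\<Prod>F\<leftarrow>Fs. poly F m)))"
    unfolding product_values using no_fixed_prime_divisor[OF assms(2) c] by blast
  ultimately have "infinite {m::int. m > 0 \<and> (\<forall>F \<in> set Fs. prime (poly F m))}" (is "infinite ?M")
    using assms(1) unfolding SchinzelH_def by blast
  moreover have "inj_on (\<lambda>m. c + p * m) ?M" using \<open>p > 0\<close> by (intro inj_onI) simp
  moreover have "(\<lambda>m. c + p * m) ` ?M \<subseteq> {L. prime L \<and> prime (3 * L - 2) \<and> [3 * L = 1] (mod p)}"
  proof (rule image_subsetI)
    fix m assume "m \<in> ?M"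
    then have "prime (c + p * m)" "prime (3 * (c + p * m) - 2)"
      using c unfolding Fs_def by (simp_all add: algebra_simps)
    moreover have "3 * (c + p * m) = 1 + p * (1 + 3 * m)" using c by (simp add: algebra_simps)
    ultimately show "c + p * m \<in> {L. prime L \<and> prime (3 * L - 2) \<and> [3 * L = 1] (mod p)}"
      by (simp add: cong_def)
  qed
  ultimately show ?thesis using finite_imageD finite_subset by blast
qed

section \<open>The septuples\<close>

text \<open>The parametrized form at \<open>\<lambda> = \<gamma> = 1\<close>, \<open>\<mu> = 0\<close>, \<open>F\<^sub>0 = 3\<close> and
  \<open>t\<^sub>0 = L - 6\<delta>\<^sub>0\<close>, where \<open>p\<epsilon>\<^sub>0 + 9\<delta>\<^sub>0 = 1\<close>: the Bezout coefficients cancel from every entry.\<close>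

definition fm_septuple :: "int \<Rightarrow> int \<Rightarrow> septuple" where
  "fm_septuple p L =
    ((p - 9) div 2, -18 + (27 + 3 * p) * L, 18 + (3 * p - 27) * L, (p + 9) div 2,
     9 * L * (2 - 3 * L), 6, 3)"

lemma fm_septuple_odd:
  assumes "p = 2 * k + 1"
  shows "fm_septuple p L =
    (k - 4, -18 + (27 + 3 * p) * L, 18 + (3 * p - 27) * L, k + 5, 9 * L * (2 - 3 * L), 6, 3)"
  using assms unfolding fm_septuple_def by simp

lemma inj_fm_septuple:
  assumes "p > 0"
  shows "inj (fm_septuple p)"
proof (rule injI)
  fix L L' assume "fm_septuple p L = fm_septuple p L'"
  then have "(27 + 3 * p) * L = (27 + 3 * p) * L'" unfolding fm_septuple_def by simp
  then show "L = L'" using assms by simp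
qed

lemma multiplicity_prime_le_one:
  fixes l q :: "'a :: factorial_semiring"
  assumes "prime l" "prime q"
  shows "multiplicity l q \<le> 1"
  using assms by (cases "l = q") (simp_all add: prime_multiplicity_other)

lemma multiplicity_fm_septuple_E_le:
  fixes l L :: int
  assumes "prime l" "prime L" "prime (3 * L - 2)"
  shows "multiplicity l (9 * L * (2 - 3 * L)) \<le> 4"
proof -
  have l: "prime_elem l" using assms(1) by (rule prime_imp_prime_elem)
  have "L \<noteq> 0" "2 - 3 * L \<noteq> 0" using assms(2,3) by auto
  then have "multiplicity l (9 * L * (2 - 3 * L))
      = multiplicity l 9 + multiplicity l L + multiplicity l (2 - 3 * L)"
    using l by (simp add: prime_elem_multiplicity_mult_distrib)
  also have "multiplicity l (9::int) = multiplicity l 3 + multiplicity l 3"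
    using prime_elem_multiplicity_mult_distrib[OF l, of 3 3] by simp
  also have "multiplicity l (2 - 3 * L) = multiplicity l (3 * L - 2)"
    using multiplicity_uminus_right[of l "3 * L - 2"] by simp
  also have "multiplicity l 3 + multiplicity l 3 + multiplicity l L + multiplicity l (3 * L - 2)
      \<le> 1 + 1 + 1 + 1"
    using multiplicity_prime_le_one[OF assms(1)] assms(2,3) by (intro add_mono) auto
  finally show ?thesis by simp
qed

lemma fm_septuple_param_entries:
  fixes p eps0 del0 L :: int
  assumes "p * eps0 + 9 * del0 = 1"
  shows "2 * p * 3^2 * (del0 - eps0) + (p + 9) * (L - 6 * del0) * 3 = -18 + (27 + 3 * p) * L"
    and "2 * p * 3^2 * (del0 + eps0) + (p - 9) * (L - 6 * del0) * 3 = 18 + (3 * p - 27) * L"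
    and "3 * (2 * p * 3 * eps0 - 9 * (L - 6 * del0)) * (2 * 3 * del0 + (L - 6 * del0))
      = 9 * L * (2 - 3 * L)"
  \<comment> \<open>after ring normalisation these are linear in the Bezout relation and \<open>L\<close> times it\<close>
  using arg_cong[where f = "\<lambda>x. L * x", OF assms] assms
  by (simp add: algebra_simps power2_eq_square; linarith)+

lemma fm_septuple_param_form:
  assumes "prime p" "p \<noteq> 3"
  shows "param_form p (fm_septuple p L)"
proof -
  have "coprime p 3" using assms by (simp add: primes_coprime)
  then have "coprime p 9" using coprime_mult_right_iff[of p 3 3] by simp
  then obtain eps0 del0 where bezout: "p * eps0 + 9 * del0 = 1"
    using bezout_int[of p 9] by (auto simp: mult.commute)
  have eps0: "eps0 \<noteq> 0"
  proof
    assume "eps0 = 0"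
    then have "9 * del0 = 1" using bezout by simp
    then show False by presburger
  qed
  have del0: "del0 \<noteq> 0"
  proof
    assume "del0 = 0"
    then have "p dvd 1" using bezout by (metis add.right_neutral dvd_triv_left mult_zero_right)
    then show False using assms(1) not_prime_unit by blast
  qed
  show ?thesis
    unfolding param_form_def fm_septuple_def
    by (rule exI[of _ 1], rule exI[of _ 1], rule exI[of _ eps0], rule exI[of _ del0],
        rule exI[of _ 0], rule exI[of _ "L - 6 * del0"], rule exI[of _ 3])
      (use eps0 del0 fm_septuple_param_entries[OF bezout] \<open>coprime p 3\<close> bezout in simp)
qed

lemma fm_septuple_A1:
  assumes "odd p"
  shows "A1 p (fm_septuple p L)"
proof -
  obtain k where p: "p = 2 * k + 1" using assms by (rule oddE)
  have "(-18 + (27 + 3 * p) * L)^2 - (18 + (3 * p - 27) * L)^2 + 2 * p * (9 * L * (2 - 3 * L)) * 6 = 0"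
    "2 * (k - 4) * (-18 + (27 + 3 * p) * L) - 2 * (18 + (3 * p - 27) * L) * (k + 5) + p * 6^2 = 0"
    "(k - 4)^2 - (k + 5)^2 + p * 3^2 = 0"
    unfolding p by (simp_all add: algebra_simps power2_eq_square)
  then show ?thesis unfolding A1_def fm_septuple_odd[OF p] by simp
qed

lemma fm_septuple_E_eq: "9 * (L::int) * (2 - 3 * L) = 3 - 3 * (3 * L - 1)^2"
  by (simp add: algebra_simps power2_eq_square)

lemma fm_septuple_A3:
  assumes "prime p" "p \<noteq> 3" "odd p" "[3 * L = 1] (mod p)"
  shows "A3 p (fm_septuple p L)"
proof -
  obtain k where p: "p = 2 * k + 1" using assms(3) by (rule oddE)
  have "coprime p 3" using assms(1,2) by (simp add: primes_coprime)
  have "\<not> p dvd 3"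
  proof
    assume "p dvd 3"
    then have "is_unit p" by (rule coprime_common_divisor[OF \<open>coprime p 3\<close> dvd_refl])
    then show False using assms(1) not_prime_unit by blast
  qed
  have "gcd (gcd (k - 4) (k + 5)) 3 dvd (k - 4) + (k + 5)"
    by (meson dvd_add gcd_dvd1 gcd_dvd2 dvd_trans)
  then have "gcd (gcd (k - 4) (k + 5)) 3 dvd gcd p 3"
    unfolding p by (intro gcd_greatest) simp_all
  then have "gcd (gcd (k - 4) (k + 5)) 3 = 1" using \<open>coprime p 3\<close> by simp
  moreover have "\<not> [9 * L * (2 - 3 * L) = 0] (mod p)"
  proof
    assume "[9 * L * (2 - 3 * L) = 0] (mod p)"
    moreover have "p dvd 3 * (3 * L - 1)^2"
      using assms(4) by (simp add: cong_iff_dvd_diff power2_eq_square)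
    ultimately have "p dvd 3 - 3 * (3 * L - 1)^2 + 3 * (3 * L - 1)^2"
      unfolding fm_septuple_E_eq cong_0_iff by (intro dvd_add)
    with \<open>\<not> p dvd 3\<close> show False by simp
  qed
  ultimately show ?thesis
    using \<open>\<not> p dvd 3\<close> unfolding A3_def fm_septuple_odd[OF p] by (simp add: cong_0_iff)
qed

lemma fm_septuple_A4:
  assumes "prime p" "odd p"
  shows "A4 p (fm_septuple p L)"
proof -
  obtain k where p: "p = 2 * k + 1" using assms(2) by (rule oddE)
  define B where "B = -18 + (27 + 3 * p) * L"
  define C where "C = 18 + (3 * p - 27) * L"
  define E where "E = 9 * L * (2 - 3 * L)"
  have AC_BD: "(k - 4) * C - B * (k + 5) = 2 * 3^2 * p * (1 - 3 * L)"
    unfolding B_def C_def p by (simp add: algebra_simps)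
  have DE_CF_AE_BF: "((k + 5) * E - C * 6) - ((k - 4) * E - B * 6) = 27 * (3 * L - 1) * (5 - 3 * L) - 3^4"
    unfolding B_def C_def E_def p by (simp add: algebra_simps)
  have "\<not> l dvd gcd (gcd ((k - 4) * C - B * (k + 5)) ((k + 5) * E - C * 6)) ((k - 4) * E - B * 6)"
    if l: "prime l" "odd l" "l \<noteq> 3" "l \<noteq> p" for l
  proof
    assume "l dvd gcd (gcd ((k - 4) * C - B * (k + 5)) ((k + 5) * E - C * 6)) ((k - 4) * E - B * 6)"
    then have d1: "l dvd (k - 4) * C - B * (k + 5)"
      and d23: "l dvd ((k + 5) * E - C * 6) - ((k - 4) * E - B * 6)"
      by (meson dvd_diff gcd_dvd1 gcd_dvd2 dvd_trans)+
    have "\<not> l dvd 2" using l primes_dvd_imp_eq[of l 2] by auto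
    moreover have "\<not> l dvd 3" using l primes_dvd_imp_eq[of l 3] by auto
    moreover have "\<not> l dvd p" using l assms(1) primes_dvd_imp_eq by blast
    moreover have "l dvd 2 \<or> l dvd 3^2 \<or> l dvd p \<or> l dvd 1 - 3 * L"
      using d1 unfolding AC_BD prime_dvd_mult_iff[OF l(1)] by blast
    ultimately have "l dvd 1 - 3 * L" using l(1) prime_dvd_power by blast
    then have "l dvd 27 * (3 * L - 1) * (5 - 3 * L)"
      by (metis dvd_minus_iff minus_diff_eq dvd_mult dvd_mult2)
    then have "l dvd 27 * (3 * L - 1) * (5 - 3 * L) - (27 * (3 * L - 1) * (5 - 3 * L) - 3^4)"
      using d23 unfolding DE_CF_AE_BF by (rule dvd_diff)
    then have "l dvd 3^4" by simp
    with \<open>\<not> l dvd 3\<close> l(1) show False using prime_dvd_power by blast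
  qed
  then show ?thesis
    unfolding A4_def fm_septuple_odd[OF p] B_def[symmetric] C_def[symmetric] E_def[symmetric]
    by (simp only: prod.case) blast
qed

lemma fm_septuple_A5:
  assumes "prime p" "p mod 8 = 1" "p mod 3 = 2" "[3 * L = 1] (mod p)"
  shows "A5 p (fm_septuple p L)"
proof -
  have "odd p" using assms(2) by presburger
  then obtain k where p: "p = 2 * k + 1" by (rule oddE)
  define B where "B = -18 + (27 + 3 * p) * L"
  have L: "p dvd 3 * L - 1" using assms(4) by (simp add: cong_iff_dvd_diff)
  then have "p dvd 3 * ((3 * L - 1) * (3 * L - 1))" by (intro dvd_mult dvd_mult2)
  then have "[3 - 9 * L * (2 - 3 * L) * 1^6 = 0] (mod p)"
    unfolding fm_septuple_E_eq by (simp add: cong_0_iff power2_eq_square)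
  moreover have "QNR p (k - 4 + z * B * 1^4)" if "[z^3 = 1] (mod p)" for z
  proof -
    have "p dvd z - 1"
      using cube_root_of_unity_trivial[OF assms(1,3) that] by (simp add: cong_iff_dvd_diff)
    then have "p dvd p * (1 + 6 * L) + 18 * (3 * L - 1) + 2 * B * (z - 1)"
      using L by (intro dvd_add dvd_mult dvd_triv_left)
    also have "p * (1 + 6 * L) + 18 * (3 * L - 1) + 2 * B * (z - 1) = 2 * (k - 4 + z * B) - (-27)"
      unfolding B_def p by (simp add: algebra_simps)
    finally show ?thesis
      using QNR_if_double_cong_minus_27[OF assms(1-3)] by (simp add: cong_iff_dvd_diff)
  qed
  ultimately show ?thesis unfolding A5_def fm_septuple_odd[OF p] B_def[symmetric] by blast
qed

lemma fm_septuple_A2: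
  assumes "prime L" "prime (3 * L - 2)" "n \<ge> 1"
  shows "A2 p n (fm_septuple p L)"
proof -
  have "int (multiplicity l (9 * L * (2 - 3 * L))) - int (multiplicity l (3::int)) < 6 * int n"
    if "prime l" for l
    using multiplicity_fm_septuple_E_le[OF that assms(1,2)] assms(3) by linarith
  then show ?thesis unfolding A2_def fm_septuple_def by (simp only: prod.case) blast
qed

lemma fm_septuple_A6:
  assumes "prime L" "prime (3 * L - 2)" "n \<ge> 1"
  shows "A6 n (fm_septuple p L)"
  using multiplicity_fm_septuple_E_le[OF _ assms(1,2), of 3] assms(3)
  unfolding A6_def fm_septuple_def by simp

lemma fm_septuple_A7:
  assumes "odd p" "p mod 3 = 2"
  shows "A7 (fm_septuple p L)"
proof -
  obtain k where p: "p = 2 * k + 1" using assms(1) by (rule oddE)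
  have "k mod 3 = 2" using p assms(2) by presburger
  then have "(k - 22 + 3 * ((9 + p) * L)) mod 3 = 1" by presburger
  moreover have "k - 4 + (-18 + (27 + 3 * p) * L) = k - 22 + 3 * ((9 + p) * L)"
    by (simp add: algebra_simps)
  ultimately have "(k - 4 + (-18 + (27 + 3 * p) * L)) mod 3 = 1" by argo
  then show ?thesis unfolding A7_def fm_septuple_odd[OF p] cong_def by simp
qed

lemma fm_septuple_in_Cp_HypFM:
  assumes "prime p" "p mod 8 = 1" "p mod 3 = 2"
    and "prime L" "prime (3 * L - 2)" "[3 * L = 1] (mod p)" "n \<ge> 1"
  shows "fm_septuple p L \<in> {s \<in> Cp p. HypFM p n s}"
proof -
  have "odd p" "p \<noteq> 3" using assms(2,3) by presburger+
  have "fm_septuple p L \<in> Cp p"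
    unfolding Cp_def
    using fm_septuple_param_form[OF assms(1) \<open>p \<noteq> 3\<close>] fm_septuple_A1[OF \<open>odd p\<close>]
      fm_septuple_A3[OF assms(1) \<open>p \<noteq> 3\<close> \<open>odd p\<close> assms(6)] fm_septuple_A4[OF assms(1) \<open>odd p\<close>]
      fm_septuple_A5[OF assms(1-3,6)] fm_septuple_A6[OF assms(4,5)] fm_septuple_A7[OF \<open>odd p\<close> assms(3)]
    by blast
  moreover have "fm_septuple p L \<noteq> (0, 0, 0, 0, 0, 0, 0)" by (simp add: fm_septuple_def)
  ultimately show ?thesis
    using fm_septuple_A2[OF assms(4,5,7)] assms(7) unfolding HypFM_def Cp_def by blast
qed

theorem corollary9p6:
  fixes p :: int
  assumes "SchinzelH"
    and "prime p" and "[p = 1] (mod 8)" and "[p = 2] (mod 3)"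
  shows "\<forall>n::nat. n \<ge> 1 \<longrightarrow> infinite {s \<in> Cp p. HypFM p n s}"
proof (intro allI impI)
  fix n :: nat assume "n \<ge> 1"
  have p8: "p mod 8 = 1" and p3: "p mod 3 = 2" using assms(3,4) by (simp_all add: cong_def)
  let ?S = "{L. prime L \<and> prime (3 * L - 2) \<and> [3 * L = 1] (mod p)}"
  have "infinite (fm_septuple p ` ?S)"
    using infinite_prime_pairs_in_progression[OF assms(1,2) p3]
      inj_fm_septuple[OF prime_gt_0_int[OF assms(2)]]
    by (simp add: finite_image_iff inj_on_subset)
  moreover have "fm_septuple p ` ?S \<subseteq> {s \<in> Cp p. HypFM p n s}"
    using fm_septuple_in_Cp_HypFM[OF assms(2) p8 p3 _ _ _ \<open>n \<ge> 1\<close>] by blast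
  ultimately show "infinite {s \<in> Cp p. HypFM p n s}" using infinite_super by blast
qed

end
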